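(* Let $n\ge1$, let $\Delta\subset\mathbb{R}^n$ be an $n$-simplex with vertices $\mathbf{x}_0,\dots,\mathbf{x}_n$, and let $f\colon\Delta\to\mathbb{R}$ be convex. For every partition $\mathcal{K}=\{K_1,\dots,K_p\}$ of $N=\{0,\dots,n\}$, $$(n+1)\operatorname{Avg}(f,\Delta)\le \sum_{i=1}^p\operatorname{card}(K_i)\operatorname{Avg}(f,\Delta_{K_i})\le f(\mathbf{x}_0)+\dots+f(\mathbf{x}_n).$$
   Context: $\mathbf{x}_0,\dots,\mathbf{x}_n\in\mathbb{R}^n$ are affinely independent and $\Delta=\operatorname{conv}\{\mathbf{x}_0,\dots,\mathbf{x}_n\}$. For nonempty $K\subset N$, $\Delta_K=\operatorname{conv}\{\mathbf{x}_i:i\in K\}$, a $(\operatorname{card}K-1)$-simplex. For a $k$-simplex $\Sigma$ and integrable $g$, $\operatorname{Avg}(g,\Sigma)=\frac{1}{\operatorname{Vol}_k(\Sigma)}\int_\Sigma g\,d\mathbf{x}$ with respect to $k$-dimensional Lebesgue measure on the affine hull of $\Sigma$; for a $0$-simplex $\{\mathbf{y}\}$, $\operatorname{Avg}(g,\{\mathbf{y}\})=g(\mathbf{y})$. A partition of $N$ is a family of pairwise disjoint nonempty subsets of $N$ with union $N$. *)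

theory Defs
  imports "HOL-Analysis.Analysis" "HOL-Library.Disjoint_Sets"
begin

text \<open>Barycentric/affine parametrisation of the face \<open>\<Delta>_K = conv {x i | i \<in> K}\<close>:
  with \<open>j = Min K\<close> and \<open>I = K - {j}\<close>, the point with parameters \<open>\<mu> \<in> \<real>^I\<close> is
  \<open>x j + (\<Sum>i\<in>I. \<mu> i (x i - x j))\<close>, and \<open>\<Delta>_K\<close> is the image of the standard
  simplex \<open>{\<mu> \<ge> 0, \<Sum>\<mu> \<le> 1}\<close> in \<open>\<real>^I\<close>.\<close>

definition face_param_set :: "nat set \<Rightarrow> (nat \<Rightarrow> real) set" where
  "face_param_set K = (let I = K - {Min K} in
     {\<mu> \<in> PiE I (\<lambda>_. UNIV). (\<forall>i\<in>I. 0 \<le> \<mu> i) \<and> sum \<mu> I \<le> 1})"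

definition face_param_measure :: "nat set \<Rightarrow> (nat \<Rightarrow> real) measure" where
  "face_param_measure K = PiM (K - {Min K}) (\<lambda>_. lborel)"

definition face_point :: "(nat \<Rightarrow> 'a::real_vector) \<Rightarrow> nat set \<Rightarrow> (nat \<Rightarrow> real) \<Rightarrow> 'a" where
  "face_point x K \<mu> = x (Min K) + (\<Sum>i\<in>K - {Min K}. \<mu> i *\<^sub>R (x i - x (Min K)))"

text \<open>\<open>Avg(g, \<Delta>_K)\<close>: average of \<open>g\<close> over the \<open>(card K - 1)\<close>-simplex \<open>\<Delta>_K\<close> w.r.t.
  \<open>(card K - 1)\<close>-dimensional Lebesgue measure on its affine hull, computed through the
  affine parametrisation (which scales that measure by a constant factor, so the average
  is unchanged). For \<open>card K = 1\<close> this is \<open>g (x j)\<close>.\<close>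

definition Avg_face :: "('a::real_vector \<Rightarrow> real) \<Rightarrow> (nat \<Rightarrow> 'a) \<Rightarrow> nat set \<Rightarrow> real" where
  "Avg_face g x K =
     (LINT \<mu>:face_param_set K|face_param_measure K. g (face_point x K \<mu>))
       / measure (face_param_measure K) (face_param_set K)"

end

(*
  Let t = (t_i) be independent standard exponential weights and T = \<Sum>_{i\<in>K} t_i. The normalised
  vector (t_i / T)_{i\<in>K} is uniformly distributed on the simplex and independent of T, whose mean
  is card K. Hence card K \<cdot> Avg(f, \<Delta>_K) = E[T f(\<Sum>_{i\<in>K} t_i x_i / T)], the expectation of the
  perspective of f. By convexity the perspective is subadditive over a partition, and taking
  expectations gives the first inequality; applied to the partition of each block into
  singletons it gives the second, since the average over a vertex is the value there.
  For the integrals to make sense, f is shifted to a nonnegative bounded function on \<Delta>, and it is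
  Borel measurable there because it is continuous on the relative interior of every face.
*)

theory Submission
  imports Defs "HOL-Probability.Distributions"
begin

section \<open>Convex functions on simplices\<close>

lemma convex_on_convex_hull_bounded_below:
  fixes X :: "'a::real_vector set"
  assumes X: "finite X" and f: "convex_on (convex hull X) f"
  obtains m where "\<And>y. y \<in> convex hull X \<Longrightarrow> m \<le> f y"
proof (cases "X = {}")
  case False
  define n where "n = real (card X)"
  have n: "n \<ge> 1" using X False by (simp add: n_def Suc_le_eq card_gt_0_iff)
  define \<alpha> where "\<alpha> = 1 / (n + 1)"
  have \<alpha>: "0 < \<alpha>" "\<alpha> < 1" "\<alpha> \<le> 1 / n" using n by (auto simp: \<alpha>_def field_simps)
  define c where "c = (\<Sum>v\<in>X. (1 / n) *\<^sub>R v)"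
  define M where "M = Max (f ` X)"
  have M: "\<And>y. y \<in> convex hull X \<Longrightarrow> f y \<le> M"
    using convex_on_convex_hull_bound[OF f] X False by (auto simp: M_def)
  show thesis
  proof (rule that)
    fix y assume y: "y \<in> convex hull X"
    obtain u where u: "\<forall>v\<in>X. 0 \<le> u v" "sum u X = 1" "(\<Sum>v\<in>X. u v *\<^sub>R v) = y"
      using y X by (auto simp: convex_hull_finite)
    txt \<open>The barycentre \<open>c\<close> of \<open>X\<close> is a proper convex combination of \<open>y\<close> and a point \<open>q\<close>
      of the hull, so \<open>f c \<le> (1 - \<alpha>) M + \<alpha> f y\<close>.\<close>
    define w where "w = (\<lambda>v. (1 / n - \<alpha> * u v) / (1 - \<alpha>))"
    define q where "q = (\<Sum>v\<in>X. w v *\<^sub>R v)"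
    have "\<alpha> * u v \<le> 1 / n" if "v \<in> X" for v
    proof -
      have "u v \<le> 1" using member_le_sum[of v X u] u X that by auto
      then show ?thesis using \<alpha> mult_left_mono[of "u v" 1 \<alpha>] by linarith
    qed
    then have w_nonneg: "v \<in> X \<Longrightarrow> 0 \<le> w v" for v
      using \<alpha> by (auto simp: w_def)
    have "sum w X = 1"
      using n u \<alpha> by (simp add: w_def sum_divide_distrib[symmetric] sum_subtractf
          sum_distrib_left[symmetric] n_def)
    then have q: "q \<in> convex hull X"
      unfolding q_def using X w_nonneg by (intro convex_sum) (auto simp: hull_inc)
    have "(1 - \<alpha>) *\<^sub>R q = c - \<alpha> *\<^sub>R y"
      using \<alpha> unfolding q_def w_def c_def u(3)[symmetric] scaleR_sum_right scaleR_scaleR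
      by (simp add: scaleR_diff_left sum_subtractf)
    then have "c = (1 - \<alpha>) *\<^sub>R q + \<alpha> *\<^sub>R y"
      by simp
    then have "f c \<le> (1 - \<alpha>) * f q + \<alpha> * f y"
      using convex_onD[OF f, of \<alpha> q y] \<alpha> q y by simp
    also have "\<dots> \<le> (1 - \<alpha>) * M + \<alpha> * f y"
      using M[OF q] \<alpha> by (simp add: mult_left_mono)
    finally show "(f c - (1 - \<alpha>) * M) / \<alpha> \<le> f y"
      using \<alpha> by (simp add: pos_divide_le_eq mult.commute)
  qed
qed simp

lemma convex_on_abs_diff_le:
  assumes f: "convex_on S f" and M: "\<And>y. y \<in> S \<Longrightarrow> f y \<le> M"
    and t: "0 < t" "t \<le> 1" and x: "x \<in> S" and y: "y \<in> S"
    and z: "x + (1 / t) *\<^sub>R (y - x) \<in> S" and w: "x - (1 / t) *\<^sub>R (y - x) \<in> S"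
  shows "\<bar>f y - f x\<bar> \<le> t * (M - f x)"
proof -
  let ?z = "x + (1 / t) *\<^sub>R (y - x)" and ?w = "x - (1 / t) *\<^sub>R (y - x)"
  have "y = (1 - t) *\<^sub>R x + t *\<^sub>R ?z"
    using t by (simp add: algebra_simps)
  then have upper: "f y \<le> (1 - t) * f x + t * f ?z"
    using convex_onD[OF f, of t x ?z] t x z by simp
  have "x = (1 - t / (1 + t)) *\<^sub>R y + (t / (1 + t)) *\<^sub>R ?w"
    using t by (simp add: field_simps scaleR_add_right scaleR_diff_right flip: scaleR_add_left)
  then have "f x \<le> (1 - t / (1 + t)) * f y + (t / (1 + t)) * f ?w"
    using convex_onD[OF f, of "t / (1 + t)" y ?w] t y w by simp
  then have "(1 + t) * f x \<le> (1 + t) * ((1 - t / (1 + t)) * f y + (t / (1 + t)) * f ?w)"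
    using t by simp
  also have "\<dots> = f y + t * f ?w"
  proof -
    have "(1 + t) * (1 - t / (1 + t)) = 1" "(1 + t) * (t / (1 + t)) = t"
      using t by (simp_all add: field_simps)
    then show ?thesis
      unfolding distrib_left mult.assoc[symmetric] by simp
  qed
  finally have lower: "(1 + t) * f x \<le> f y + t * f ?w" .
  have "t * f ?z \<le> t * M" "t * f ?w \<le> t * M"
    using M[OF z] M[OF w] t by simp_all
  with upper lower show ?thesis
    by (simp add: algebra_simps abs_le_iff)
qed

lemma convex_on_abs_diff_le_dist:
  fixes S :: "'a::real_normed_vector set"
  assumes f: "convex_on S f" and M: "\<And>y. y \<in> S \<Longrightarrow> f y \<le> M"
    and x: "x \<in> S" and r: "0 < r" "ball x r \<inter> affine hull S \<subseteq> S"
    and y: "y \<in> S" "dist y x < r / 2"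
  shows "\<bar>f y - f x\<bar> \<le> 2 * dist y x / r * (M - f x)"
proof (cases "y = x")
  case False
  define t where "t = 2 * dist y x / r"
  have t: "0 < t" "t \<le> 1" using False y r by (auto simp: t_def field_simps)
  have "x + s *\<^sub>R (y - x) \<in> S" if "\<bar>s\<bar> = 1 / t" for s
  proof -
    have "norm (s *\<^sub>R (y - x)) = \<bar>s\<bar> * dist y x"
      by (simp add: dist_norm)
    also have "\<dots> = r / 2"
      using that t r False by (simp add: t_def)
    finally have "x + s *\<^sub>R (y - x) \<in> ball x r"
      using r by (simp add: dist_norm)
    moreover have "x + s *\<^sub>R (y - x) \<in> affine hull S"
      using mem_affine[OF affine_affine_hull, of x S y "1 - s" s] x y(1)
      by (simp add: hull_inc algebra_simps)
    ultimately show ?thesis using r by blast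
  qed
  from this[of "1 / t"] this[of "- (1 / t)"] t have "\<bar>f y - f x\<bar> \<le> t * (M - f x)"
    by (intro convex_on_abs_diff_le[OF f M _ _ x y(1)]) auto
  then show ?thesis by (simp add: t_def)
qed (use M[OF x] r in simp)

lemma convex_on_rel_interior_continuous:
  fixes S :: "'a::euclidean_space set"
  assumes f: "convex_on S f" and M: "\<And>y. y \<in> S \<Longrightarrow> f y \<le> M"
  shows "continuous_on (rel_interior S) f"
  unfolding continuous_on_iff
proof (intro ballI allI impI)
  fix x e assume x: "x \<in> rel_interior S" and e: "(0::real) < e"
  obtain r where xS: "x \<in> S" and r: "r > 0" "ball x r \<inter> affine hull S \<subseteq> S"
    using x by (auto simp: mem_rel_interior_ball)
  define c where "c = M - f x"
  have c: "0 \<le> c" using M[OF xS] by (simp add: c_def)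
  define d where "d = min (r / 2) (e * r / (2 * c + 2))"
  show "\<exists>d>0. \<forall>y\<in>rel_interior S. dist y x < d \<longrightarrow> dist (f y) (f x) < e"
  proof (intro exI[of _ d] conjI ballI impI)
    show "0 < d" using r e c by (simp add: d_def)
    fix y assume y: "y \<in> rel_interior S" "dist y x < d"
    then have "y \<in> S" "dist y x < r / 2"
      using rel_interior_subset by (auto simp: d_def)
    then have bound: "\<bar>f y - f x\<bar> \<le> 2 * dist y x / r * c"
      using convex_on_abs_diff_le_dist[OF f M xS r] by (simp add: c_def)
    have "2 * dist y x * c \<le> 2 * (e * r / (2 * c + 2)) * c"
      using y c by (intro mult_right_mono) (auto simp: d_def)
    also have "\<dots> < e * r"
      using c e r by (simp add: field_simps)
    finally have "2 * dist y x / r * c < e"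
      using r by (simp add: field_simps)
    with bound show "dist (f y) (f x) < e"
      by (simp add: dist_real_def)
  qed
qed

lemma borel_measurable_indicator_UN_times:
  fixes f :: "'a::topological_space \<Rightarrow> real"
  assumes "finite A" "\<And>a. a \<in> A \<Longrightarrow> S a \<in> sets borel"
    and "\<And>a. a \<in> A \<Longrightarrow> (\<lambda>y. indicator (S a) y * f y) \<in> borel_measurable borel"
  shows "(\<lambda>y. indicator (\<Union>a\<in>A. S a) y * f y) \<in> borel_measurable borel"
  using assms
proof (induction A rule: finite_induct)
  case (insert a A)
  define U where "U = (\<Union>a\<in>A. S a)"
  have "(\<lambda>y. indicator (\<Union>a\<in>insert a A. S a) y * f y)
      = (\<lambda>y. indicator (S a) y * f y + indicator U y * f y - indicator (S a) y * (indicator U y * f y))"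
    by (auto simp: U_def indicator_def fun_eq_iff)
  then show ?case
    using insert by (simp add: U_def)
qed simp

text \<open>A convex function is continuous on the relative interior of a simplex, and the relative
  boundary is the union of the facets, on which induction applies.\<close>

lemma borel_measurable_convex_on_simplex:
  fixes X :: "'a::euclidean_space set"
  assumes "\<not> affine_dependent X" "convex_on (convex hull X) f"
  shows "(\<lambda>y. indicator (convex hull X) y * f y) \<in> borel_measurable borel"
  using assms
proof (induction "card X" arbitrary: X rule: less_induct)
  case (less X)
  have X: "finite X" using less.prems aff_independent_finite by blast
  have hull_borel: "convex hull Y \<in> sets borel" if "Y \<subseteq> X" for Y
    using X that by (intro borel_closed compact_imp_closed finite_imp_compact_convex_hull)
      (auto intro: finite_subset)
  define B where "B = (\<Union>a\<in>X. convex hull (X - {a}))"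
  have ri: "rel_interior (convex hull X) = convex hull X - B"
    using rel_boundary_of_convex_hull[OF less.prems(1)] rel_interior_subset[of "convex hull X"]
    unfolding B_def by blast
  have "B \<subseteq> convex hull X"
    unfolding B_def by (auto dest: hull_mono[of "X - _" X, THEN subsetD, rotated])
  then have split: "(\<lambda>y. indicator (convex hull X) y * f y)
      = (\<lambda>y. indicator (rel_interior (convex hull X)) y * f y + indicator B y * f y)"
    unfolding ri by (auto simp: indicator_def fun_eq_iff)
  have "(\<lambda>y. indicator B y * f y) \<in> borel_measurable borel"
    unfolding B_def
  proof (rule borel_measurable_indicator_UN_times[OF X hull_borel])
    fix a assume a: "a \<in> X"
    show "(\<lambda>y. indicator (convex hull (X - {a})) y * f y) \<in> borel_measurable borel"
    proof (rule less.hyps)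
      show "card (X - {a}) < card X" by (rule card_Diff1_less[OF X a])
      show "\<not> affine_dependent (X - {a})"
        using less.prems(1) by (rule affine_independent_subset) auto
      show "convex_on (convex hull (X - {a})) f"
        using less.prems(2) by (rule convex_on_subset) (intro hull_mono, auto)
    qed
  qed auto
  moreover have "(\<lambda>y. indicator (rel_interior (convex hull X)) y * f y) \<in> borel_measurable borel"
  proof -
    have "continuous_on (rel_interior (convex hull X)) f"
      using convex_on_convex_hull_bound[OF less.prems(2), of "Max (f ` X)"] X
      by (intro convex_on_rel_interior_continuous[OF less.prems(2)]) auto
    moreover have "rel_interior (convex hull X) \<in> sets borel"
      unfolding ri B_def using hull_borel X by (intro sets.Diff sets.finite_UN) auto
    ultimately show ?thesis
      using borel_measurable_continuous_on_indicator[of "rel_interior (convex hull X)" f]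
      by (simp add: mult.commute)
  qed
  ultimately show ?case
    unfolding split by simp
qed

lemma convex_on_simplex_nonneg_shift:
  fixes X :: "'a::euclidean_space set"
  assumes simplex: "\<not> affine_dependent X" and f: "convex_on (convex hull X) f"
  obtains F M m where "F \<in> borel_measurable borel" "convex_on (convex hull X) F"
    "\<And>y. 0 \<le> F y" "\<And>y. F y \<le> M" "\<And>y. y \<in> convex hull X \<Longrightarrow> F y = f y - m"
proof -
  have X: "finite X"
    using simplex aff_independent_finite by blast
  obtain m where m: "\<And>y. y \<in> convex hull X \<Longrightarrow> m \<le> f y"
    using convex_on_convex_hull_bounded_below[OF X f] by blast
  define M where "M = Max (f ` X)"
  have M: "\<And>y. y \<in> convex hull X \<Longrightarrow> f y \<le> M"
    using convex_on_convex_hull_bound[OF f, of M] X by (auto simp: M_def)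
  define F where "F y = indicator (convex hull X) y * (f y - m)" for y
  have F_shift: "\<And>y. y \<in> convex hull X \<Longrightarrow> F y = f y - m"
    by (simp add: F_def)
  show thesis
  proof (rule that[OF _ _ _ _ F_shift])
    have [measurable]: "convex hull X \<in> sets borel"
      using X by (intro borel_closed compact_imp_closed finite_imp_compact_convex_hull)
    note [measurable] = borel_measurable_convex_on_simplex[OF simplex f]
    show "F \<in> borel_measurable borel"
      unfolding F_def[abs_def] right_diff_distrib by measurable
    have "convex_on (convex hull X) (\<lambda>y. f y - m)"
      using f by (intro convex_on_diff) (simp_all add: concave_on_const)
    then show "convex_on (convex hull X) F"
      unfolding convex_on_def by (simp add: F_shift convexD[OF convex_convex_hull])
    show "0 \<le> F y" "F y \<le> \<bar>M - m\<bar>" for y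
      using m M abs_ge_self[of "M - m"] by (fastforce simp: F_def indicator_def)+
  qed
qed

section \<open>Subadditivity of the perspective\<close>

lemma convex_on_perspective_sum_le:
  fixes V :: "'b \<Rightarrow> 'a::real_vector"
  assumes P: "finite P" and F: "convex_on C F"
    and T: "\<And>L. L \<in> P \<Longrightarrow> 0 \<le> T L"
    and V: "\<And>L. L \<in> P \<Longrightarrow> 0 < T L \<Longrightarrow> V L /\<^sub>R T L \<in> C"
    and V0: "\<And>L. L \<in> P \<Longrightarrow> T L = 0 \<Longrightarrow> V L = 0"
  shows "sum T P * F (sum V P /\<^sub>R sum T P) \<le> (\<Sum>L\<in>P. T L * F (V L /\<^sub>R T L))"
proof (cases "sum T P = 0")
  case True
  then show ?thesis
    using P T by (simp add: sum_nonneg_eq_0_iff)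
next
  case False
  then have pos: "0 < sum T P"
    using T sum_nonneg[of P T] by fastforce
  define P' where "P' = {L \<in> P. T L \<noteq> 0}"
  have P': "finite P'" "P' \<subseteq> P" using P by (auto simp: P'_def)
  have sum_T: "sum T P' = sum T P"
    using P by (intro sum.mono_neutral_left) (auto simp: P'_def)
  have sum_V: "sum V P = (\<Sum>L\<in>P'. (T L / sum T P) *\<^sub>R (V L /\<^sub>R T L)) /\<^sub>R inverse (sum T P)"
  proof -
    have "sum V P = sum V P'"
      using P V0 by (intro sum.mono_neutral_right) (auto simp: P'_def)
    then show ?thesis
      using pos by (simp add: P'_def scaleR_sum_right)
  qed
  have "F (sum V P /\<^sub>R sum T P) = F (\<Sum>L\<in>P'. (T L / sum T P) *\<^sub>R (V L /\<^sub>R T L))"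
    using pos by (simp add: sum_V)
  also have "\<dots> \<le> (\<Sum>L\<in>P'. (T L / sum T P) * F (V L /\<^sub>R T L))"
  proof (rule convex_on_sum[OF P'(1) _ F])
    show "P' \<noteq> {}" using sum_T False by auto
    show "(\<Sum>L\<in>P'. T L / sum T P) = 1"
      using sum_T pos by (simp add: sum_divide_distrib[symmetric])
    show "0 \<le> T L / sum T P" "V L /\<^sub>R T L \<in> C" if "L \<in> P'" for L
      using that T[of L] V[of L] pos by (auto simp: P'_def)
  qed
  also have "\<dots> = (\<Sum>L\<in>P'. T L * F (V L /\<^sub>R T L)) / sum T P"
    by (simp add: sum_divide_distrib)
  finally have "sum T P * F (sum V P /\<^sub>R sum T P) \<le> (\<Sum>L\<in>P'. T L * F (V L /\<^sub>R T L))"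
    using pos by (simp add: pos_le_divide_eq mult.commute)
  also have "\<dots> = (\<Sum>L\<in>P. T L * F (V L /\<^sub>R T L))"
    using P by (intro sum.mono_neutral_left) (auto simp: P'_def)
  finally show ?thesis .
qed

lemma sum_partition_on:
  assumes "finite A" "partition_on A P"
  shows "sum g A = (\<Sum>L\<in>P. sum g L)"
proof -
  have "finite L" if "L \<in> P" for L
    using assms that by (auto dest: partition_onD1 intro: finite_subset)
  then show ?thesis
    using sum.Union_disjoint[of P g] partition_onD1[OF assms(2)] partition_onD2[OF assms(2)]
      finite_elements[OF assms] by (auto simp: disjoint_def)
qed

lemma scaleR_sum_in_convex_hull:
  fixes xs :: "'i \<Rightarrow> 'a::real_vector"
  assumes "finite L" "\<And>i. i \<in> L \<Longrightarrow> 0 \<le> t i" "0 < sum t L"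
  shows "(\<Sum>i\<in>L. t i *\<^sub>R xs i) /\<^sub>R sum t L \<in> convex hull (xs ` L)"
proof -
  have "(\<Sum>i\<in>L. t i *\<^sub>R xs i) /\<^sub>R sum t L = (\<Sum>i\<in>L. (t i / sum t L) *\<^sub>R xs i)"
    by (simp add: scaleR_sum_right divide_inverse_commute)
  also have "\<dots> \<in> convex hull (xs ` L)"
    using assms by (intro convex_sum) (auto simp: hull_inc sum_divide_distrib[symmetric])
  finally show ?thesis .
qed

definition perspective ::
    "('a::real_vector \<Rightarrow> real) \<Rightarrow> ('i \<Rightarrow> 'a) \<Rightarrow> 'i set \<Rightarrow> ('i \<Rightarrow> real) \<Rightarrow> ennreal" where
  "perspective F xs K t = ennreal (sum t K * F ((\<Sum>i\<in>K. t i *\<^sub>R xs i) /\<^sub>R sum t K))"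

lemma perspective_le_sum_partition:
  fixes xs :: "'i \<Rightarrow> 'a::real_vector"
  assumes K: "finite K" "partition_on K P" and F: "convex_on C F" "\<And>y. 0 \<le> F y"
    and C: "convex hull (xs ` K) \<subseteq> C" and t: "\<And>i. i \<in> K \<Longrightarrow> 0 \<le> t i"
  shows "perspective F xs K t \<le> (\<Sum>L\<in>P. perspective F xs L t)"
proof -
  have P: "finite P" "\<And>L. L \<in> P \<Longrightarrow> L \<subseteq> K"
    using finite_elements[OF K] partition_onD1[OF K(2)] by auto
  have L: "finite L" "\<And>i. i \<in> L \<Longrightarrow> 0 \<le> t i" if "L \<in> P" for L
    using P(2)[OF that] K t by (auto intro: finite_subset)
  have "sum t K * F ((\<Sum>i\<in>K. t i *\<^sub>R xs i) /\<^sub>R sum t K)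
      \<le> (\<Sum>L\<in>P. sum t L * F ((\<Sum>i\<in>L. t i *\<^sub>R xs i) /\<^sub>R sum t L))"
    unfolding sum_partition_on[OF K, of t] sum_partition_on[OF K, of "\<lambda>i. t i *\<^sub>R xs i"]
  proof (rule convex_on_perspective_sum_le[OF P(1) F(1)])
    show "0 \<le> sum t L" if "L \<in> P" for L
      using L[OF that] by (simp add: sum_nonneg)
    show "(\<Sum>i\<in>L. t i *\<^sub>R xs i) /\<^sub>R sum t L \<in> C" if "L \<in> P" "0 < sum t L" for L
      using scaleR_sum_in_convex_hull[OF L(1,2)[OF that(1)] that(2), of xs]
        hull_mono[OF image_mono[OF P(2)[OF that(1)]], of convex xs] C by auto
    show "(\<Sum>i\<in>L. t i *\<^sub>R xs i) = 0" if "L \<in> P" "sum t L = 0" for L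
      using that L[OF that(1)] by (simp add: sum_nonneg_eq_0_iff)
  qed
  then show ?thesis
    unfolding perspective_def using L F(2)
    by (subst sum_ennreal) (auto intro!: ennreal_leI mult_nonneg_nonneg sum_nonneg)
qed

section \<open>Integrals over finite products of Lebesgue measure\<close>

lemma measurable_restrict_scale[measurable]:
  fixes a :: "'i \<Rightarrow> real"
  assumes "I \<subseteq> J"
  shows "(\<lambda>x. restrict (\<lambda>k. a k * x k) I) \<in> measurable (PiM J (\<lambda>_. lborel)) (PiM I (\<lambda>_. lborel))"
proof (rule measurable_restrict)
  fix k assume "k \<in> I"
  with assms have "k \<in> J" by auto
  then show "(\<lambda>x. a k * x k) \<in> measurable (PiM J (\<lambda>_. lborel)) lborel"
    by measurable
qed

lemma measurable_pair_fun_upd_PiM: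
  fixes I :: "'i set"
  assumes "i \<notin> I"
  shows "(\<lambda>(y, x). x(i := y)) \<in> measurable (lborel \<Otimes>\<^sub>M PiM I (\<lambda>_. lborel)) (PiM (insert i I) (\<lambda>_. lborel))"
proof -
  have "(\<lambda>p. \<lambda>k\<in>insert i I. if k = i then fst p else snd p k)
      \<in> measurable (lborel \<Otimes>\<^sub>M PiM I (\<lambda>_. lborel)) (PiM (insert i I) (\<lambda>_. lborel))"
    by (intro measurable_restrict) auto
  moreover have "(\<lambda>k\<in>insert i I. if k = i then fst p else snd p k) = (case p of (y, x) \<Rightarrow> x(i := y))"
    if "p \<in> space (lborel \<Otimes>\<^sub>M PiM I (\<lambda>_. lborel))" for p
    using assms that by (auto simp: space_PiM PiE_def extensional_def fun_eq_iff space_pair_measure)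
  ultimately show ?thesis
    by (rule measurable_cong[THEN iffD1, rotated])
qed

lemma measurable_fun_upd_PiM:
  assumes "i \<notin> I"
  shows "(\<lambda>x. x(i := y)) \<in> measurable (PiM I (\<lambda>_. lborel)) (PiM (insert i I) (\<lambda>_. lborel))"
proof -
  have "(\<lambda>x. (y, x)) \<in> measurable (PiM I (\<lambda>_. lborel)) (lborel \<Otimes>\<^sub>M PiM I (\<lambda>_. lborel))"
    by simp
  from measurable_comp[OF this measurable_pair_fun_upd_PiM[OF assms]] show ?thesis
    by (simp add: comp_def)
qed

lemma borel_measurable_nn_integral_fun_upd:
  fixes I :: "'i set"
  assumes "i \<notin> I" "finite I" and \<psi>: "\<psi> \<in> borel_measurable (PiM (insert i I) (\<lambda>_. lborel))"
  shows "(\<lambda>y. \<integral>\<^sup>+x. \<psi> (x(i := y)) \<partial>PiM I (\<lambda>_. lborel)) \<in> borel_measurable lborel"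
    and "(\<lambda>x. \<integral>\<^sup>+y. \<psi> (x(i := y)) \<partial>lborel) \<in> borel_measurable (PiM I (\<lambda>_. lborel))"
proof -
  interpret finite_product_sigma_finite "\<lambda>_. lborel" I by standard (use assms in auto)
  have upd: "(\<lambda>(y, x). \<psi> (x(i := y))) \<in> borel_measurable (lborel \<Otimes>\<^sub>M PiM I (\<lambda>_. lborel))"
    using measurable_comp[OF measurable_pair_fun_upd_PiM[OF assms(1)] \<psi>]
    by (simp add: comp_def case_prod_beta')
  then show "(\<lambda>y. \<integral>\<^sup>+x. \<psi> (x(i := y)) \<partial>PiM I (\<lambda>_. lborel)) \<in> borel_measurable lborel"
    using borel_measurable_nn_integral[of "\<lambda>y x. \<psi> (x(i := y))" lborel] by simp
  have "(\<lambda>(x, y). \<psi> (x(i := y))) \<in> borel_measurable (PiM I (\<lambda>_. lborel) \<Otimes>\<^sub>M lborel)"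
    using measurable_comp[OF measurable_pair_swap' upd] by (simp add: comp_def case_prod_beta')
  then show "(\<lambda>x. \<integral>\<^sup>+y. \<psi> (x(i := y)) \<partial>lborel) \<in> borel_measurable (PiM I (\<lambda>_. lborel))"
    using lborel.borel_measurable_nn_integral[of "\<lambda>x y. \<psi> (x(i := y))" "PiM I (\<lambda>_. lborel)"]
    by simp
qed

lemma nn_integral_PiM_lborel_scale:
  fixes c :: real and I :: "'i set"
  assumes "finite I" "0 < c" "\<phi> \<in> borel_measurable (PiM I (\<lambda>_. lborel))"
  shows "(\<integral>\<^sup>+x. \<phi> x \<partial>PiM I (\<lambda>_. lborel))
       = ennreal (c ^ card I) * (\<integral>\<^sup>+x. \<phi> (restrict (\<lambda>k. c * x k) I) \<partial>PiM I (\<lambda>_. lborel))"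
  using assms(1,3)
proof (induction I arbitrary: \<phi> rule: finite_induct)
  case empty
  then show ?case
    by (simp add: PiM_empty nn_integral_count_space_finite)
next
  case (insert i I \<phi>)
  interpret product_sigma_finite "\<lambda>_. lborel" by standard
  note [measurable] = insert.prems
  let ?M = "PiM I (\<lambda>_. lborel)" and ?Mi = "PiM (insert i I) (\<lambda>_. lborel)"
  define s where "s x = restrict (\<lambda>k. c * x k) I" for x :: "'i \<Rightarrow> real"
  define \<psi> where "\<psi> z = \<phi> (restrict (\<lambda>k. (if k = i then 1 else c) * z k) (insert i I))" for z :: "'i \<Rightarrow> real"
  have [measurable]: "\<psi> \<in> borel_measurable ?Mi"
    unfolding \<psi>_def by measurable
  have \<psi>_upd: "\<psi> (x(i := y)) = \<phi> ((s x)(i := y))" for x y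
    using insert.hyps by (auto simp: \<psi>_def s_def fun_eq_iff intro!: arg_cong[where f=\<phi>])
  have upd_measurable: "(\<lambda>x. \<phi> (x(i := y))) \<in> borel_measurable ?M" for y
    using measurable_compose[OF measurable_fun_upd_PiM insert.prems] insert.hyps by simp
  have "(\<integral>\<^sup>+x. \<phi> x \<partial>?Mi) = (\<integral>\<^sup>+y. (\<integral>\<^sup>+x. \<phi> (x(i := y)) \<partial>?M) \<partial>lborel)"
    using insert by (intro product_nn_integral_insert_rev) auto
  also have "\<dots> = (\<integral>\<^sup>+y. ennreal (c ^ card I) * (\<integral>\<^sup>+x. \<psi> (x(i := y)) \<partial>?M) \<partial>lborel)"
    unfolding \<psi>_upd s_def by (intro nn_integral_cong insert.IH[OF upd_measurable])
  also have "\<dots> = ennreal (c ^ card I) * (\<integral>\<^sup>+x. (\<integral>\<^sup>+y. \<psi> (x(i := y)) \<partial>lborel) \<partial>?M)"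
    using insert.hyps borel_measurable_nn_integral_fun_upd(1)[of i I \<psi>]
    by (simp add: nn_integral_cmult product_nn_integral_insert_rev[symmetric] product_nn_integral_insert)
  also have "(\<integral>\<^sup>+x. (\<integral>\<^sup>+y. \<psi> (x(i := y)) \<partial>lborel) \<partial>?M)
      = (\<integral>\<^sup>+x. ennreal c * (\<integral>\<^sup>+y. \<phi> (restrict (\<lambda>k. c * (x(i := y)) k) (insert i I)) \<partial>lborel) \<partial>?M)"
  proof (rule nn_integral_cong)
    fix x :: "'i \<Rightarrow> real"
    have "s x \<in> space ?M"
      by (simp add: s_def space_PiM)
    from measurable_comp[OF measurable_component_update[OF this insert.hyps(2)] insert.prems]
    have "(\<lambda>y. \<phi> ((s x)(i := y))) \<in> borel_measurable borel"
      by (simp add: comp_def)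
    moreover have "(s x)(i := c * y) = restrict (\<lambda>k. c * (x(i := y)) k) (insert i I)" for y
      using insert.hyps by (auto simp: s_def fun_eq_iff)
    ultimately show "(\<integral>\<^sup>+y. \<psi> (x(i := y)) \<partial>lborel)
        = ennreal c * (\<integral>\<^sup>+y. \<phi> (restrict (\<lambda>k. c * (x(i := y)) k) (insert i I)) \<partial>lborel)"
      using nn_integral_real_affine[of "\<lambda>y. \<phi> ((s x)(i := y))" c 0] assms(2)
      by (simp add: \<psi>_upd)
  qed
  also have "\<dots> = ennreal c * (\<integral>\<^sup>+x. \<phi> (restrict (\<lambda>k. c * x k) (insert i I)) \<partial>?Mi)"
  proof -
    have m: "(\<lambda>x. \<phi> (restrict (\<lambda>k. c * x k) (insert i I))) \<in> borel_measurable ?Mi"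
      by measurable
    show ?thesis
      by (simp only: nn_integral_cmult[OF borel_measurable_nn_integral_fun_upd(2)[OF insert.hyps(2,1) m]]
          product_nn_integral_insert[OF insert.hyps(1,2) m])
  qed
  finally have "(\<integral>\<^sup>+x. \<phi> x \<partial>?Mi)
      = ennreal (c ^ card I) * (ennreal c * (\<integral>\<^sup>+x. \<phi> (restrict (\<lambda>k. c * x k) (insert i I)) \<partial>?Mi))" .
  moreover have "ennreal (c ^ card (insert i I)) = ennreal c * ennreal (c ^ card I)"
    using insert.hyps assms(2) by (simp add: ennreal_mult)
  ultimately show ?case
    by (simp only: mult_ac)
qed

section \<open>Exponential weights\<close>

definition exp_density :: "real \<Rightarrow> ennreal" where
  "exp_density y = ennreal (exp (- y)) * indicator {0..} y"

definition exp_product_density :: "'i set \<Rightarrow> ('i \<Rightarrow> real) \<Rightarrow> ennreal" where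
  "exp_product_density I t = (\<Prod>i\<in>I. exp_density (t i))"

lemma borel_measurable_exp_density[measurable]: "exp_density \<in> borel_measurable borel"
  unfolding exp_density_def by measurable

lemma borel_measurable_exp_product_density[measurable]:
  "finite I \<Longrightarrow> J \<subseteq> I \<Longrightarrow> exp_product_density J \<in> borel_measurable (PiM I (\<lambda>_. lborel))"
  unfolding exp_product_density_def by (measurable; auto)

lemma nn_integral_exp_density: "(\<integral>\<^sup>+y. exp_density y \<partial>lborel) = 1"
  using nn_intergal_power_times_exp_Ici[of 0] by (simp add: exp_density_def)

lemma nn_integral_exp_product_density:
  assumes "finite I"
  shows "(\<integral>\<^sup>+t. exp_product_density I t \<partial>PiM I (\<lambda>_. lborel)) = 1"
proof -
  interpret product_sigma_finite "\<lambda>_. lborel" by standard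
  show ?thesis
    using product_nn_integral_prod[of I "\<lambda>_. exp_density"] assms
    by (simp add: exp_product_density_def nn_integral_exp_density)
qed

lemma exp_product_density_eq:
  "finite I \<Longrightarrow> exp_product_density I t
     = ennreal (exp (- sum t I)) * indicator {t. \<forall>i\<in>I. 0 \<le> t i} t"
proof (induction I rule: finite_induct)
  case (insert i I)
  then show ?case
    by (simp add: exp_product_density_def exp_density_def exp_diff exp_minus field_simps
        ennreal_mult[symmetric] indicator_def)
qed (simp add: exp_product_density_def)

lemma exp_product_density_fun_upd:
  "finite I \<Longrightarrow> j \<notin> I \<Longrightarrow> exp_product_density (insert j I) (x(j := y)) = exp_density y * exp_product_density I x"
  by (simp add: exp_product_density_def, intro arg_cong2[where f=times] prod.cong) auto

text \<open>Integrating out the coordinates outside \<open>L\<close> costs nothing, since each has a probability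
  density.\<close>

lemma nn_integral_exp_product_density_restrict:
  fixes K :: "'a set"
  assumes K: "finite K" "L \<subseteq> K" and \<phi>[measurable]: "\<phi> \<in> borel_measurable (PiM L (\<lambda>_. lborel))"
  shows "(\<integral>\<^sup>+t. exp_product_density K t * \<phi> (restrict t L) \<partial>PiM K (\<lambda>_. lborel))
       = (\<integral>\<^sup>+t. exp_product_density L t * \<phi> t \<partial>PiM L (\<lambda>_. lborel))"
proof -
  interpret product_sigma_finite "\<lambda>_. lborel" by standard
  define J where "J = K - L"
  have KLJ: "K = L \<union> J" "L \<inter> J = {}" "finite L" "finite J"
    using K by (auto simp: J_def finite_subset)
  have "(\<lambda>t. \<phi> (restrict t L)) \<in> borel_measurable (PiM K (\<lambda>_. lborel))"
    using measurable_compose[OF measurable_restrict_subset[OF K(2)] \<phi>] .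
  then have "(\<lambda>t. exp_product_density K t * \<phi> (restrict t L)) \<in> borel_measurable (PiM (L \<union> J) (\<lambda>_. lborel))"
    using K unfolding KLJ(1)[symmetric] by measurable
  then have "(\<integral>\<^sup>+t. exp_product_density K t * \<phi> (restrict t L) \<partial>PiM K (\<lambda>_. lborel))
     = (\<integral>\<^sup>+x. (\<integral>\<^sup>+y. exp_product_density K (merge L J (x, y)) * \<phi> (restrict (merge L J (x, y)) L)
          \<partial>PiM J (\<lambda>_. lborel)) \<partial>PiM L (\<lambda>_. lborel))"
    unfolding KLJ(1) by (rule product_nn_integral_fold[OF KLJ(2-4)])
  also have "\<dots> = (\<integral>\<^sup>+x. (\<integral>\<^sup>+y. (exp_product_density L x * \<phi> x) * exp_product_density J y
          \<partial>PiM J (\<lambda>_. lborel)) \<partial>PiM L (\<lambda>_. lborel))"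
  proof (intro nn_integral_cong)
    fix x y :: "'a \<Rightarrow> real" assume x: "x \<in> space (PiM L (\<lambda>_. lborel))"
    have "restrict (merge L J (x, y)) L = x"
      using x by (auto simp: space_PiM merge_def PiE_def extensional_def fun_eq_iff)
    moreover have "exp_product_density K (merge L J (x, y)) = exp_product_density L x * exp_product_density J y"
      unfolding exp_product_density_def KLJ(1) using KLJ
      by (subst prod.union_disjoint) (auto simp: merge_def intro!: prod.cong arg_cong2[where f=times])
    ultimately show "exp_product_density K (merge L J (x, y)) * \<phi> (restrict (merge L J (x, y)) L)
        = (exp_product_density L x * \<phi> x) * exp_product_density J y"
      by (simp add: mult_ac)
  qed
  also have "\<dots> = (\<integral>\<^sup>+x. exp_product_density L x * \<phi> x \<partial>PiM L (\<lambda>_. lborel))"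
    using KLJ by (simp add: nn_integral_cmult nn_integral_exp_product_density)
  finally show ?thesis .
qed

section \<open>The moment of the perspective\<close>

definition std_simplex :: "'i set \<Rightarrow> real \<Rightarrow> ('i \<Rightarrow> real) set" where
  "std_simplex I T = {\<mu>. (\<forall>i\<in>I. 0 \<le> \<mu> i) \<and> sum \<mu> I \<le> T}"

definition simplex_chart :: "('i \<Rightarrow> 'a::real_vector) \<Rightarrow> 'i \<Rightarrow> 'i set \<Rightarrow> ('i \<Rightarrow> real) \<Rightarrow> 'a" where
  "simplex_chart xs j I \<mu> = xs j + (\<Sum>i\<in>I. \<mu> i *\<^sub>R (xs i - xs j))"

definition face_moment :: "('a::euclidean_space \<Rightarrow> real) \<Rightarrow> ('i \<Rightarrow> 'a) \<Rightarrow> 'i set \<Rightarrow> ennreal" where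
  "face_moment F xs K = (\<integral>\<^sup>+t. exp_product_density K t * perspective F xs K t \<partial>PiM K (\<lambda>_. lborel))"

lemma pred_std_simplex[measurable]:
  assumes "finite I" and f: "f \<in> measurable M (PiM I (\<lambda>_. lborel))" and [measurable]: "g \<in> borel_measurable M"
  shows "Measurable.pred M (\<lambda>x. f x \<in> std_simplex I (g x))"
proof -
  have [measurable]: "(\<lambda>x. f x i) \<in> borel_measurable M" if "i \<in> I" for i
    using measurable_compose[OF f measurable_component_singleton[OF that]] by simp
  show ?thesis
    unfolding std_simplex_def using assms(1) by measurable
qed

lemma borel_measurable_simplex_chart[measurable]:
  fixes xs :: "'i \<Rightarrow> 'a::euclidean_space"
  shows "finite I \<Longrightarrow> simplex_chart xs j I \<in> borel_measurable (PiM I (\<lambda>_. lborel))"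
  unfolding simplex_chart_def by measurable

lemma borel_measurable_perspective[measurable]:
  fixes xs :: "'i \<Rightarrow> 'a::euclidean_space"
  assumes "finite K" "L \<subseteq> K" "F \<in> borel_measurable borel"
  shows "perspective F xs L \<in> borel_measurable (PiM K (\<lambda>_. lborel))"
proof -
  note [measurable] = assms(3)
  have [simp]: "i \<in> L \<Longrightarrow> i \<in> K" for i using assms(2) by auto
  show ?thesis unfolding perspective_def using assms(1) by measurable
qed

lemma perspective_restrict: "perspective F xs L (restrict t L) = perspective F xs L t"
  by (simp add: perspective_def)

lemma face_moment_le_sum_partition:
  fixes xs :: "'i \<Rightarrow> 'a::euclidean_space"
  assumes K: "finite K" "partition_on K P" and F: "convex_on C F" "\<And>y. 0 \<le> F y"
    and F_measurable: "F \<in> borel_measurable borel" and C: "convex hull (xs ` K) \<subseteq> C"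
  shows "face_moment F xs K \<le> (\<Sum>L\<in>P. face_moment F xs L)"
proof -
  have P: "finite P" "\<And>L. L \<in> P \<Longrightarrow> L \<subseteq> K"
    using finite_elements[OF K] partition_onD1[OF K(2)] by auto
  have "face_moment F xs K
      \<le> (\<integral>\<^sup>+t. (\<Sum>L\<in>P. exp_product_density K t * perspective F xs L t) \<partial>PiM K (\<lambda>_. lborel))"
    unfolding face_moment_def
  proof (intro nn_integral_mono)
    fix t
    show "exp_product_density K t * perspective F xs K t
        \<le> (\<Sum>L\<in>P. exp_product_density K t * perspective F xs L t)"
    proof (cases "\<forall>i\<in>K. 0 \<le> t i")
      case True
      then show ?thesis
        using perspective_le_sum_partition[OF K F C]
        by (simp add: sum_distrib_left[symmetric] mult_left_mono)
    qed (simp add: exp_product_density_eq[OF K(1)])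
  qed
  also have "\<dots> = (\<Sum>L\<in>P. \<integral>\<^sup>+t. exp_product_density K t * perspective F xs L t \<partial>PiM K (\<lambda>_. lborel))"
    using P K F_measurable by (intro nn_integral_sum) measurable
  also have "\<dots> = (\<Sum>L\<in>P. face_moment F xs L)"
  proof (intro sum.cong refl)
    fix L assume L: "L \<in> P"
    then have "perspective F xs L \<in> borel_measurable (PiM L (\<lambda>_. lborel))"
      using P K F_measurable by (intro borel_measurable_perspective) (auto intro: finite_subset)
    with L show "(\<integral>\<^sup>+t. exp_product_density K t * perspective F xs L t \<partial>PiM K (\<lambda>_. lborel))
        = face_moment F xs L"
      using nn_integral_exp_product_density_restrict[of K L "perspective F xs L"] P K F_measurable
      by (simp add: perspective_restrict face_moment_def)
  qed
  finally show ?thesis .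
qed

lemma exp_density_shift_times_exp_product_density:
  "finite I \<Longrightarrow> exp_density (T - sum x I) * exp_product_density I x
     = ennreal (exp (- T)) * indicator (std_simplex I T) x"
  by (simp add: exp_density_def exp_product_density_eq std_simplex_def indicator_def
      ennreal_mult[symmetric] exp_add[symmetric])

text \<open>The substitution \<open>T = t\<^sub>j + \<Sum>\<^sub>i\<^sub>\<in>\<^sub>I t\<^sub>i\<close> followed by Fubini.\<close>

lemma nn_integral_exp_product_density_insert:
  fixes I :: "'i set" and \<phi> :: "('i \<Rightarrow> real) \<Rightarrow> real \<Rightarrow> ennreal"
  assumes I: "finite I" "j \<notin> I"
    and \<phi>[measurable]: "(\<lambda>(x, T). \<phi> x T) \<in> borel_measurable (PiM I (\<lambda>_. lborel) \<Otimes>\<^sub>M lborel)"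
  shows "(\<integral>\<^sup>+t. exp_product_density (insert j I) t * \<phi> (restrict t I) (sum t (insert j I))
            \<partial>PiM (insert j I) (\<lambda>_. lborel))
       = (\<integral>\<^sup>+T. ennreal (exp (- T)) * (\<integral>\<^sup>+x. indicator (std_simplex I T) x * \<phi> x T
            \<partial>PiM I (\<lambda>_. lborel)) \<partial>lborel)"
proof -
  interpret product_sigma_finite "\<lambda>_. lborel" by standard
  interpret PI: finite_product_sigma_finite "\<lambda>_. lborel" I by standard (use I in auto)
  let ?M = "PiM I (\<lambda>_. lborel)"
  have \<phi>_sum: "(\<lambda>t. \<phi> (restrict t I) (sum t (insert j I))) \<in> borel_measurable (PiM (insert j I) (\<lambda>_. lborel))"
    using measurable_compose[OF measurable_Pair[OF measurable_restrict_subset, of I "insert j I"] \<phi>]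
    using I by (simp add: subset_insertI)
  have "(\<integral>\<^sup>+t. exp_product_density (insert j I) t * \<phi> (restrict t I) (sum t (insert j I))
            \<partial>PiM (insert j I) (\<lambda>_. lborel))
      = (\<integral>\<^sup>+x. (\<integral>\<^sup>+y. exp_density y * (exp_product_density I x * \<phi> x (y + sum x I)) \<partial>lborel) \<partial>?M)"
  proof (subst product_nn_integral_insert[OF I])
    show "(\<integral>\<^sup>+x. (\<integral>\<^sup>+y. exp_product_density (insert j I) (x(j := y))
              * \<phi> (restrict (x(j := y)) I) (sum (x(j := y)) (insert j I)) \<partial>lborel) \<partial>?M)
        = (\<integral>\<^sup>+x. (\<integral>\<^sup>+y. exp_density y * (exp_product_density I x * \<phi> x (y + sum x I)) \<partial>lborel) \<partial>?M)"
    proof (intro nn_integral_cong)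
      fix x :: "'i \<Rightarrow> real" and y :: real assume "x \<in> space ?M"
      then have "restrict (x(j := y)) I = x"
        using I by (auto simp: space_PiM PiE_def extensional_def fun_eq_iff)
      moreover have "sum (x(j := y)) (insert j I) = y + sum x I"
        using I by (auto intro!: sum.cong)
      ultimately show "exp_product_density (insert j I) (x(j := y))
            * \<phi> (restrict (x(j := y)) I) (sum (x(j := y)) (insert j I))
          = exp_density y * (exp_product_density I x * \<phi> x (y + sum x I))"
        using I by (simp add: exp_product_density_fun_upd mult_ac)
    qed
  qed (use I \<phi>_sum in \<open>auto intro!: borel_measurable_times_ennreal\<close>)
  also have "\<dots> = (\<integral>\<^sup>+x. (\<integral>\<^sup>+T. ennreal (exp (- T)) * indicator (std_simplex I T) x * \<phi> x T \<partial>lborel) \<partial>?M)"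
  proof (rule nn_integral_cong)
    fix x :: "'i \<Rightarrow> real" assume x: "x \<in> space ?M"
    have "(\<lambda>T. \<phi> x T) \<in> borel_measurable borel"
      using measurable_Pair2[OF \<phi> x] by simp
    then have "(\<integral>\<^sup>+y. exp_density y * (exp_product_density I x * \<phi> x (y + sum x I)) \<partial>lborel)
        = (\<integral>\<^sup>+T. exp_density (T - sum x I) * exp_product_density I x * \<phi> x T \<partial>lborel)"
      using nn_integral_real_affine[of "\<lambda>y. exp_density y * (exp_product_density I x * \<phi> x (y + sum x I))"
          1 "- sum x I"]
      by (simp add: mult.assoc)
    then show "(\<integral>\<^sup>+y. exp_density y * (exp_product_density I x * \<phi> x (y + sum x I)) \<partial>lborel)
        = (\<integral>\<^sup>+T. ennreal (exp (- T)) * indicator (std_simplex I T) x * \<phi> x T \<partial>lborel)"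
      using I by (simp add: exp_density_shift_times_exp_product_density)
  qed
  also have "\<dots> = (\<integral>\<^sup>+T. (\<integral>\<^sup>+x. ennreal (exp (- T)) * indicator (std_simplex I T) x * \<phi> x T \<partial>?M) \<partial>lborel)"
    by (rule pair_sigma_finite.Fubini'[symmetric]) (unfold_locales, use I in measurable)
  also have "\<dots> = (\<integral>\<^sup>+T. ennreal (exp (- T)) * (\<integral>\<^sup>+x. indicator (std_simplex I T) x * \<phi> x T \<partial>?M) \<partial>lborel)"
    using I by (intro nn_integral_cong) (simp add: nn_integral_cmult mult.assoc)
  finally show ?thesis .
qed

lemma nn_integral_std_simplex_scale:
  fixes I :: "'i set" and g :: "('i \<Rightarrow> real) \<Rightarrow> ennreal"
  assumes I: "finite I" and T: "0 < T" and g[measurable]: "g \<in> borel_measurable (PiM I (\<lambda>_. lborel))"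
  shows "(\<integral>\<^sup>+x. indicator (std_simplex I T) x * g (restrict (\<lambda>i. x i / T) I) \<partial>PiM I (\<lambda>_. lborel))
       = ennreal (T ^ card I) * (\<integral>\<^sup>+\<mu>. indicator (std_simplex I 1) \<mu> * g \<mu> \<partial>PiM I (\<lambda>_. lborel))"
proof -
  have "(\<lambda>x. indicator (std_simplex I T) x * g (restrict (\<lambda>i. x i / T) I))
      \<in> borel_measurable (PiM I (\<lambda>_. lborel))"
    using I by measurable
  then have "(\<integral>\<^sup>+x. indicator (std_simplex I T) x * g (restrict (\<lambda>i. x i / T) I) \<partial>PiM I (\<lambda>_. lborel))
      = ennreal (T ^ card I) * (\<integral>\<^sup>+\<mu>. indicator (std_simplex I T) (restrict (\<lambda>i. T * \<mu> i) I)
          * g (restrict (\<lambda>i. restrict (\<lambda>i. T * \<mu> i) I i / T) I) \<partial>PiM I (\<lambda>_. lborel))"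
    by (rule nn_integral_PiM_lborel_scale[OF I T])
  also have "(\<integral>\<^sup>+\<mu>. indicator (std_simplex I T) (restrict (\<lambda>i. T * \<mu> i) I)
          * g (restrict (\<lambda>i. restrict (\<lambda>i. T * \<mu> i) I i / T) I) \<partial>PiM I (\<lambda>_. lborel))
      = (\<integral>\<^sup>+\<mu>. indicator (std_simplex I 1) \<mu> * g \<mu> \<partial>PiM I (\<lambda>_. lborel))"
  proof (rule nn_integral_cong)
    fix \<mu> :: "'i \<Rightarrow> real" assume "\<mu> \<in> space (PiM I (\<lambda>_. lborel))"
    then have "restrict (\<lambda>i. restrict (\<lambda>i. T * \<mu> i) I i / T) I = \<mu>"
      using T by (auto simp: space_PiM PiE_def extensional_def fun_eq_iff)
    moreover have "restrict (\<lambda>i. T * \<mu> i) I \<in> std_simplex I T \<longleftrightarrow> \<mu> \<in> std_simplex I 1"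
      using T by (simp add: std_simplex_def zero_le_mult_iff flip: sum_distrib_left)
    ultimately show "indicator (std_simplex I T) (restrict (\<lambda>i. T * \<mu> i) I)
          * g (restrict (\<lambda>i. restrict (\<lambda>i. T * \<mu> i) I i / T) I)
        = indicator (std_simplex I 1) \<mu> * g \<mu>"
      by (simp add: indicator_def)
  qed
  finally show ?thesis .
qed

lemma perspective_insert_eq:
  fixes xs :: "'i \<Rightarrow> 'a::real_vector" and t :: "'i \<Rightarrow> real"
  assumes I: "finite I" "j \<notin> I"
  defines "T \<equiv> sum t (insert j I)"
  shows "perspective F xs (insert j I) t = ennreal (T * F (simplex_chart xs j I (\<lambda>i. t i / T)))"
proof (cases "T = 0")
  case False
  have "(\<Sum>i\<in>insert j I. t i *\<^sub>R xs i) /\<^sub>R T = (t j / T) *\<^sub>R xs j + (\<Sum>i\<in>I. (t i / T) *\<^sub>R xs i)"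
    using I by (simp add: scaleR_add_right scaleR_sum_right divide_inverse_commute)
  also have "t j / T = 1 - sum t I / T"
    using I False by (simp add: T_def field_simps)
  also have "(1 - sum t I / T) *\<^sub>R xs j + (\<Sum>i\<in>I. (t i / T) *\<^sub>R xs i)
      = simplex_chart xs j I (\<lambda>i. t i / T)"
    by (simp add: simplex_chart_def scaleR_diff_left scaleR_diff_right sum_subtractf
        scaleR_sum_left sum_divide_distrib)
  finally show ?thesis
    by (simp add: perspective_def T_def)
qed (simp add: perspective_def T_def)

lemma nn_integral_std_simplex_perspective:
  fixes xs :: "'i \<Rightarrow> 'a::euclidean_space"
  assumes I: "finite I" and F[measurable]: "F \<in> borel_measurable borel" and F_nonneg: "\<And>y. 0 \<le> F y"
  shows "(\<integral>\<^sup>+x. indicator (std_simplex I T) x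
            * ennreal (T * F (simplex_chart xs j I (restrict (\<lambda>i. x i / T) I))) \<partial>PiM I (\<lambda>_. lborel))
       = ennreal (T ^ (card I + 1)) * indicator {0..} T
          * (\<integral>\<^sup>+\<mu>. indicator (std_simplex I 1) \<mu> * ennreal (F (simplex_chart xs j I \<mu>)) \<partial>PiM I (\<lambda>_. lborel))"
    (is "?L = _ * ?A")
proof -
  consider "T < 0" | "T = 0" | "T > 0" by linarith
  then show ?thesis
  proof cases
    case 1
    then have "x \<notin> std_simplex I T" for x
      using sum_nonneg[of I x] by (auto simp: std_simplex_def)
    with 1 show ?thesis by simp
  next
    case 3
    have "?L = (\<integral>\<^sup>+x. ennreal T * (indicator (std_simplex I T) x
            * ennreal (F (simplex_chart xs j I (restrict (\<lambda>i. x i / T) I)))) \<partial>PiM I (\<lambda>_. lborel))"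
      using 3 F_nonneg by (intro nn_integral_cong) (simp add: ennreal_mult mult_ac)
    also have "\<dots> = ennreal T * (\<integral>\<^sup>+x. indicator (std_simplex I T) x
            * ennreal (F (simplex_chart xs j I (restrict (\<lambda>i. x i / T) I))) \<partial>PiM I (\<lambda>_. lborel))"
      using I by (intro nn_integral_cmult) measurable
    also have "\<dots> = ennreal T * (ennreal (T ^ card I) * ?A)"
      using 3 I by (subst nn_integral_std_simplex_scale) auto
    finally show ?thesis
      using 3 by (simp add: ennreal_mult mult_ac)
  qed simp
qed

text \<open>In probabilistic terms: \<open>(t\<^sub>i / T)\<^sub>i\<^sub>\<in>\<^sub>I\<close> is uniformly distributed on the simplex and
  independent of \<open>T\<close>, which has the Gamma density \<open>T\<^sup>n e\<^sup>-\<^sup>T / n!\<close> with \<open>n = card I\<close>.\<close>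

lemma face_moment_insert:
  fixes xs :: "'i \<Rightarrow> 'a::euclidean_space"
  assumes I: "finite I" "j \<notin> I"
    and F[measurable]: "F \<in> borel_measurable borel" and F_nonneg: "\<And>y. 0 \<le> F y"
  shows "face_moment F xs (insert j I)
       = fact (card I + 1) * (\<integral>\<^sup>+\<mu>. indicator (std_simplex I 1) \<mu> * ennreal (F (simplex_chart xs j I \<mu>))
           \<partial>PiM I (\<lambda>_. lborel))" (is "_ = _ * ?A")
proof -
  define \<phi> where "\<phi> x T = ennreal (T * F (simplex_chart xs j I (restrict (\<lambda>i. x i / T) I)))"
    for x :: "'i \<Rightarrow> real" and T :: real
  have [measurable]: "(\<lambda>p :: ('i \<Rightarrow> real) \<times> real. restrict (\<lambda>i. fst p i / snd p) I)
      \<in> measurable (PiM I (\<lambda>_. lborel) \<Otimes>\<^sub>M lborel) (PiM I (\<lambda>_. lborel))"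
  proof (rule measurable_restrict)
    fix i assume "i \<in> I"
    then show "(\<lambda>p :: ('i \<Rightarrow> real) \<times> real. fst p i / snd p)
        \<in> measurable (PiM I (\<lambda>_. lborel) \<Otimes>\<^sub>M lborel) lborel"
      by measurable
  qed
  have [measurable]: "(\<lambda>(x, T). \<phi> x T) \<in> borel_measurable (PiM I (\<lambda>_. lborel) \<Otimes>\<^sub>M lborel)"
    unfolding \<phi>_def case_prod_beta using I by measurable
  have perspective_eq: "perspective F xs (insert j I) t = \<phi> (restrict t I) (sum t (insert j I))" for t
    unfolding perspective_insert_eq[OF I] \<phi>_def simplex_chart_def
    by (auto intro!: arg_cong[where f=F] sum.cong)
  have "face_moment F xs (insert j I)
      = (\<integral>\<^sup>+T. ennreal (exp (- T)) * (\<integral>\<^sup>+x. indicator (std_simplex I T) x * \<phi> x T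
            \<partial>PiM I (\<lambda>_. lborel)) \<partial>lborel)"
    unfolding face_moment_def perspective_eq by (rule nn_integral_exp_product_density_insert[OF I]) measurable
  also have "\<dots> = (\<integral>\<^sup>+T. ennreal (T ^ (card I + 1) * exp (- T)) * indicator {0..} T * ?A \<partial>lborel)"
  proof (rule nn_integral_cong)
    fix T :: real
    show "ennreal (exp (- T)) * (\<integral>\<^sup>+x. indicator (std_simplex I T) x * \<phi> x T \<partial>PiM I (\<lambda>_. lborel))
        = ennreal (T ^ (card I + 1) * exp (- T)) * indicator {0..} T * ?A"
      using nn_integral_std_simplex_perspective[OF I(1) F F_nonneg, of T xs j]
      by (cases "0 \<le> T") (simp_all add: \<phi>_def ennreal_mult mult_ac)
  qed
  also have "\<dots> = (\<integral>\<^sup>+T. ennreal (T ^ (card I + 1) * exp (- T)) * indicator {0..} T \<partial>lborel) * ?A"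
    by (rule nn_integral_multc) measurable
  also have "(\<integral>\<^sup>+T. ennreal (T ^ (card I + 1) * exp (- T)) * indicator {0..} T \<partial>lborel) = fact (card I + 1)"
    using nn_intergal_power_times_exp_Ici[of "card I + 1"] by (simp only: of_nat_fact ennreal_fact)
  finally show ?thesis .
qed

section \<open>Face averages\<close>

lemma simplex_chart_in_convex_hull:
  fixes xs :: "'i \<Rightarrow> 'a::real_vector"
  assumes I: "finite I" "j \<notin> I" and \<mu>: "\<mu> \<in> std_simplex I 1"
  shows "simplex_chart xs j I \<mu> \<in> convex hull (xs ` insert j I)"
proof -
  define w where "w i = (if i = j then 1 - sum \<mu> I else \<mu> i)" for i
  have w_I: "i \<in> I \<Longrightarrow> w i = \<mu> i" for i
    using I by (auto simp: w_def)
  have "(\<Sum>i\<in>insert j I. w i *\<^sub>R xs i) = (1 - sum \<mu> I) *\<^sub>R xs j + (\<Sum>i\<in>I. \<mu> i *\<^sub>R xs i)"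
    using I by (simp add: w_def[of j] w_I cong: sum.cong)
  then have "simplex_chart xs j I \<mu> = (\<Sum>i\<in>insert j I. w i *\<^sub>R xs i)"
    by (simp add: simplex_chart_def scaleR_diff_left scaleR_diff_right sum_subtractf scaleR_sum_left)
  also have "\<dots> \<in> convex hull (xs ` insert j I)"
  proof (rule convex_sum)
    show "sum w (insert j I) = 1"
      using I by (simp add: w_I cong: sum.cong) (simp add: w_def)
  qed (use I \<mu> in \<open>auto simp: w_def std_simplex_def hull_inc\<close>)
  finally show ?thesis .
qed

lemma face_point_eq_simplex_chart: "face_point xs K = simplex_chart xs (Min K) (K - {Min K})"
  by (simp add: fun_eq_iff face_point_def simplex_chart_def)

lemma face_param_set_eq:
  "face_param_set K = std_simplex (K - {Min K}) 1 \<inter> space (face_param_measure K)"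
  by (auto simp: face_param_set_def face_param_measure_def std_simplex_def Let_def space_PiM)

text \<open>Only the values of \<open>f\<close> on the face enter \<open>Avg_face\<close>; there \<open>f\<close> is traded for a bounded
  nonnegative shift \<open>F\<close>, so that nonnegative integration applies.\<close>

lemma Avg_face_eq_nn_integral:
  fixes xs :: "nat \<Rightarrow> 'a::euclidean_space"
  assumes K: "finite K" "K \<noteq> {}"
    and F[measurable]: "F \<in> borel_measurable borel" and F_nonneg: "\<And>y. 0 \<le> F y"
    and F_bounded: "\<And>y. F y \<le> M" and F_shift: "\<And>y. y \<in> convex hull (xs ` K) \<Longrightarrow> F y = f y - m"
  defines "I \<equiv> K - {Min K}"
  defines "X \<equiv> \<integral>\<^sup>+\<mu>. indicator (std_simplex I 1) \<mu> * ennreal (F (simplex_chart xs (Min K) I \<mu>))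
                 \<partial>PiM I (\<lambda>_. lborel)"
  shows "X < top" and "Avg_face f xs K = fact (card I) * enn2real X + m"
proof -
  let ?M = "PiM I (\<lambda>_. lborel)" and ?A = "face_param_set K"
  have I: "finite I" "K = insert (Min K) I" "Min K \<notin> I"
    using K by (simp_all add: I_def insert_absorb)
  have A: "?A = std_simplex I 1 \<inter> space ?M"
    unfolding face_param_set_eq by (simp add: face_param_measure_def I_def)
  have [measurable]: "?A \<in> sets ?M"
    unfolding A using I by measurable
  have emeasure_A: "emeasure ?M ?A = ennreal (1 / fact (card I))"
    unfolding A std_simplex_def using emeasure_std_simplex_aux[OF I(1), of 1] by simp
  have F_chart[measurable]: "(\<lambda>\<mu>. F (simplex_chart xs (Min K) I \<mu>)) \<in> borel_measurable ?M"
    using I by measurable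
  have X: "X = (\<integral>\<^sup>+\<mu>. ennreal (indicator ?A \<mu> * F (simplex_chart xs (Min K) I \<mu>)) \<partial>?M)"
    unfolding X_def A by (intro nn_integral_cong) (auto simp: indicator_def)
  have "X \<le> (\<integral>\<^sup>+\<mu>. ennreal M * indicator ?A \<mu> \<partial>?M)"
    unfolding X by (intro nn_integral_mono) (auto simp: indicator_def F_bounded ennreal_leI)
  also have "\<dots> < top"
    using emeasure_A by (simp add: nn_integral_cmult_indicator ennreal_mult_less_top)
  finally show X_finite: "X < top" .
  have integrable: "integrable ?M (\<lambda>\<mu>. indicator ?A \<mu> * F (simplex_chart xs (Min K) I \<mu>))"
    using X_finite unfolding X using F_nonneg
    by (intro integrableI_nonneg) (auto simp: indicator_def)
  have "face_point xs K \<mu> \<in> convex hull (xs ` K)" if "\<mu> \<in> ?A" for \<mu>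
    using that simplex_chart_in_convex_hull[OF I(1,3), of \<mu> xs] I(2)
    unfolding A face_point_eq_simplex_chart I_def[symmetric] by auto
  then have "(LINT \<mu>:?A|?M. f (face_point xs K \<mu>))
      = (LINT \<mu>|?M. indicator ?A \<mu> * F (simplex_chart xs (Min K) I \<mu>) + indicator ?A \<mu> * m)"
    unfolding set_lebesgue_integral_def face_point_eq_simplex_chart I_def[symmetric]
    by (intro Bochner_Integration.integral_cong refl) (auto simp: indicator_def F_shift)
  also have "\<dots> = enn2real X + m * measure ?M ?A"
  proof -
    have "integrable ?M (\<lambda>\<mu>. indicator ?A \<mu> * m)"
      using emeasure_A by (intro integrable_mult_left integrable_real_indicator) auto
    moreover have "(LINT \<mu>|?M. indicator ?A \<mu> * F (simplex_chart xs (Min K) I \<mu>)) = enn2real X"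
      unfolding X using F_nonneg by (intro integral_eq_nn_integral) (auto simp: indicator_def)
    ultimately show ?thesis
      using integrable emeasure_A sets.Int_space_eq2[of ?A ?M] by simp
  qed
  finally show "Avg_face f xs K = fact (card I) * enn2real X + m"
    using emeasure_A unfolding Avg_face_def
    by (simp add: measure_def face_param_measure_def I_def[symmetric] field_simps)
qed

lemma card_Avg_face_eq_face_moment:
  fixes xs :: "nat \<Rightarrow> 'a::euclidean_space"
  assumes K: "finite K" "K \<noteq> {}"
    and F: "F \<in> borel_measurable borel" "\<And>y. 0 \<le> F y" "\<And>y. F y \<le> M"
    and F_shift: "\<And>y. y \<in> convex hull (xs ` K) \<Longrightarrow> F y = f y - m"
  shows "face_moment F xs K < top"
    and "real (card K) * Avg_face f xs K = enn2real (face_moment F xs K) + real (card K) * m"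
proof -
  define I where "I = K - {Min K}"
  define X where "X = (\<integral>\<^sup>+\<mu>. indicator (std_simplex I 1) \<mu> * ennreal (F (simplex_chart xs (Min K) I \<mu>))
                 \<partial>PiM I (\<lambda>_. lborel))"
  have I: "finite I" "K = insert (Min K) I" "Min K \<notin> I"
    using K by (simp_all add: I_def insert_absorb)
  then have card_K: "card K = card I + 1"
    by (metis card_insert_disjoint Suc_eq_plus1)
  have X: "X < top" "Avg_face f xs K = fact (card I) * enn2real X + m"
    using Avg_face_eq_nn_integral[OF K F F_shift] unfolding I_def X_def by auto
  have moment: "face_moment F xs K = fact (card I + 1) * X"
    unfolding X_def by (subst I(2)) (rule face_moment_insert[OF I(1,3) F(1,2)])
  have "fact (card I + 1) < (top :: ennreal)"
    using fact_neq_top_ennreal by (simp only: less_top)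
  with X(1) show "face_moment F xs K < top"
    by (simp only: moment ennreal_mult_less_top) blast
  have "enn2real (face_moment F xs K) = fact (card I + 1) * enn2real X"
    by (simp only: moment enn2real_mult flip: ennreal_fact) simp
  then show "real (card K) * Avg_face f xs K = enn2real (face_moment F xs K) + real (card K) * m"
    by (simp add: X(2) card_K algebra_simps)
qed

lemma Avg_face_singleton: "Avg_face f xs {i} = f (xs i)"
proof -
  have "face_param_set {i} = {\<lambda>_. undefined}"
    by (auto simp: face_param_set_def Let_def PiE_def extensional_def)
  moreover have "face_param_measure {i} = count_space {\<lambda>_. undefined}"
    by (simp add: face_param_measure_def PiM_empty)
  ultimately show ?thesis
    by (simp add: Avg_face_def face_point_def set_lebesgue_integral_def
        lebesgue_integral_count_space_finite measure_def)
qed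

lemma card_Avg_face_le_sum_partition:
  fixes xs :: "nat \<Rightarrow> 'a::euclidean_space"
  assumes K: "finite K" "partition_on K P"
    and simplex: "\<not> affine_dependent (xs ` K)" and f: "convex_on (convex hull (xs ` K)) f"
  shows "real (card K) * Avg_face f xs K \<le> (\<Sum>L\<in>P. real (card L) * Avg_face f xs L)"
proof (cases "K = {}")
  case False
  let ?D = "convex hull (xs ` K)"
  obtain F M m where F_measurable: "F \<in> borel_measurable borel" and F_convex: "convex_on ?D F"
    and F_nonneg: "\<And>y. 0 \<le> F y" and F_bounded: "\<And>y. F y \<le> M"
    and F_shift: "\<And>y. y \<in> ?D \<Longrightarrow> F y = f y - m"
    by (rule convex_on_simplex_nonneg_shift[OF simplex f]) (rule that)
  have P: "finite P" "\<And>L. L \<in> P \<Longrightarrow> L \<subseteq> K \<and> L \<noteq> {}"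
    using finite_elements[OF K] partition_onD1[OF K(2)] partition_onD3[OF K(2)] by auto
  have faces: "face_moment F xs L < top"
      "real (card L) * Avg_face f xs L = enn2real (face_moment F xs L) + real (card L) * m"
    if "L \<subseteq> K" "L \<noteq> {}" for L
  proof -
    have "convex hull (xs ` L) \<subseteq> ?D"
      using that(1) by (intro hull_mono image_mono)
    with card_Avg_face_eq_face_moment[OF finite_subset[OF that(1) K(1)] that(2) F_measurable
        F_nonneg F_bounded, of xs f m] F_shift
    show "face_moment F xs L < top"
      "real (card L) * Avg_face f xs L = enn2real (face_moment F xs L) + real (card L) * m"
      by auto
  qed
  have "enn2real (face_moment F xs K) \<le> enn2real (\<Sum>L\<in>P. face_moment F xs L)"
    using face_moment_le_sum_partition[OF K F_convex F_nonneg F_measurable order_refl] faces P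
    by (intro enn2real_mono) auto
  also have "\<dots> = (\<Sum>L\<in>P. enn2real (face_moment F xs L))"
    using faces P by (simp add: enn2real_sum)
  finally show ?thesis
    using faces[OF order_refl False] faces P sum_partition_on[OF K, of "\<lambda>_. 1::real"]
    by (simp add: sum.distrib sum_distrib_right)
qed (use K in \<open>simp add: partition_on_empty\<close>)

theorem corollary3:
  fixes x :: "nat \<Rightarrow> real ^ 'n"
    and f :: "real ^ 'n \<Rightarrow> real"
    and P :: "nat set set"
  assumes "inj_on x {0..CARD('n)}"
    and "\<not> affine_dependent (x ` {0..CARD('n)})"
    and "convex_on (convex hull (x ` {0..CARD('n)})) f"
    and "partition_on {0..CARD('n)} P"
  shows "real (CARD('n) + 1) * Avg_face f x {0..CARD('n)}
           \<le> (\<Sum>K\<in>P. real (card K) * Avg_face f x K)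
         \<and> (\<Sum>K\<in>P. real (card K) * Avg_face f x K) \<le> (\<Sum>i\<in>{0..CARD('n)}. f (x i))"
proof
  let ?N = "{0..CARD('n)}"
  show "real (CARD('n) + 1) * Avg_face f x ?N \<le> (\<Sum>K\<in>P. real (card K) * Avg_face f x K)"
    using card_Avg_face_le_sum_partition[OF _ assms(4,2,3)] by simp
  have "real (card K) * Avg_face f x K \<le> (\<Sum>i\<in>K. f (x i))" if "K \<in> P" for K
  proof -
    have K: "K \<subseteq> ?N" "finite K"
      using that assms(4) by (auto dest: partition_onD1 intro: finite_subset)
    have "\<not> affine_dependent (x ` K)"
      using assms(2) by (rule affine_independent_subset) (use K in auto)
    moreover have "convex_on (convex hull (x ` K)) f"
      using assms(3) hull_mono[OF image_mono[OF K(1)]] by (rule convex_on_subset) simp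
    ultimately have "real (card K) * Avg_face f x K \<le> (\<Sum>L\<in>(\<lambda>i. {i}) ` K. real (card L) * Avg_face f x L)"
      by (intro card_Avg_face_le_sum_partition[OF K(2) partition_on_singletons])
    then show ?thesis
      by (simp add: sum.reindex Avg_face_singleton)
  qed
  then have "(\<Sum>K\<in>P. real (card K) * Avg_face f x K) \<le> (\<Sum>K\<in>P. \<Sum>i\<in>K. f (x i))"
    by (rule sum_mono)
  also have "\<dots> = (\<Sum>i\<in>?N. f (x i))"
    using sum_partition_on[OF _ assms(4), of "\<lambda>i. f (x i)"] by simp
  finally show "(\<Sum>K\<in>P. real (card K) * Avg_face f x K) \<le> (\<Sum>i\<in>?N. f (x i))" .
qed

end
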